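(* Let $\alpha\in\mathbb{N}_0+\frac12$, $\mathbf m=(m_1,\dots,m_n)\in\mathbb{N}_0^n$ and $(t_{m_1},\dots,t_{m_n})\in\mathbb{R}^n$. Define recursively $\tilde\tau_0=1$, $\tilde\pi_{0;i}=C^{(\alpha)}_i$, $\tilde\rho_{0;i_1i_2}=\rho^{(\alpha)}_{i_1i_2}$, and for $j=1,\dots,n$: $\tilde\tau_j=(1+t_{m_j}\tilde\rho_{j-1;m_jm_j})\tilde\tau_{j-1}$, $\tilde\pi_{j;i}=(1+t_{m_j}\tilde\rho_{j-1;m_jm_j})\tilde\pi_{j-1;i}-t_{m_j}\tilde\rho_{j-1;im_j}\tilde\pi_{j-1;m_j}$ ($i\in\mathbb{N}_0$), $\tilde\rho_{j;i_1i_2}=\tilde\rho_{j-1;i_1i_2}-\dfrac{t_{m_j}\tilde\rho_{j-1;i_1m_j}\tilde\rho_{j-1;i_2m_j}}{1+t_{m_j}\tilde\rho_{j-1;m_jm_j}}$ ($i_1,i_2\in\mathbb{N}_0$). Then $\tau^{(\alpha)}_{\mathbf m}=\tilde\tau_n$ and $C^{(\alpha)}_{\mathbf m;i}=\tilde\pi_{n;i}$ for all $i\in\mathbb{N}_0$. In particular all $\tilde\tau_j,\tilde\pi_{j;i}$ are polynomials in $z$.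
   Context: $C^{(\alpha)}_i(z)=\sum_{k=0}^{\lfloor i/2\rfloor}(-1)^k\frac{\Gamma(i-k+\alpha)}{\Gamma(\alpha)k!(i-2k)!}(2z)^{i-2k}$ are the classical Gegenbauer polynomials; $W^{(\alpha)}(z)=(1-z^2)^{\alpha-1/2}$. For $i,j\in\mathbb{N}_0$, $\rho^{(\alpha)}_{ij}(z)=\int_{-1}^zC^{(\alpha)}_i(u)C^{(\alpha)}_j(u)W^{(\alpha)}(u)\,du$ (a polynomial since $\alpha\in\mathbb{N}_0+\frac12$). For $\mathbf m=(m_1,\dots,m_n)\in\mathbb{N}_0^n$ with real parameters $(t_{m_1},\dots,t_{m_n})$, $\mathcal R^{(\alpha)}_{\mathbf m}$ is the $n\times n$ matrix with entries $[\mathcal R^{(\alpha)}_{\mathbf m}]_{k\ell}=\delta_{k\ell}+t_{m_\ell}\rho^{(\alpha)}_{m_km_\ell}(z)$; $\tau^{(\alpha)}_{\mathbf m}=\det\mathcal R^{(\alpha)}_{\mathbf m}$; $\mathbf Q^{(\alpha)}_{\mathbf m}=\tau^{(\alpha)}_{\mathbf m}(\mathcal R^{(\alpha)}_{\mathbf m})^{-1}(C^{(\alpha)}_{m_1},\dots,C^{(\alpha)}_{m_n})^T$. For $i\in\mathbb{N}_0$, $C^{(\alpha)}_{\mathbf m;i}$ is the $(n+1)$-st entry of $\mathbf Q^{(\alpha)}_{(m_1,\dots,m_n,i)}$ computed with parameters $(t_{m_1},\dots,t_{m_n},s)$, $s\in\mathbb{R}$ arbitrary (the entry does not depend on $s$).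 *)

theory Defs
  imports "HOL-Analysis.Analysis" "HOL-Computational_Algebra.Polynomial"
    "HOL-Computational_Algebra.Fraction_Field"
    "Jordan_Normal_Form.Gauss_Jordan_Elimination" "Jordan_Normal_Form.Determinant"
begin

text \<open>Throughout, alpha = real a + 1/2 with a :: nat, so W(u) = (1-u^2)^a.
  All objects live in the field K of real rational functions in z.\<close>

type_synonym K = "real poly fract"

definition emb :: "real poly \<Rightarrow> K" where
  "emb p = Fract p 1"

definition geg :: "real \<Rightarrow> nat \<Rightarrow> real poly" where
  "geg \<alpha> i = (\<Sum>k\<le>i div 2. Polynomial.smult ((-1)^k * Gamma (real (i - k) + \<alpha>)
        / (Gamma \<alpha> * fact k * fact (i - 2*k))) ([:0, 2:] ^ (i - 2*k)))"

definition rho :: "nat \<Rightarrow> nat \<Rightarrow> nat \<Rightarrow> real poly" where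
  "rho a i j = (THE p. \<forall>z. poly p z =
     (LBINT u=-1..z. poly (geg (real a + 1/2) i) u * poly (geg (real a + 1/2) j) u * (1 - u^2)^a))"

text \<open>The matrix R_m with parameters ts (ts ! l is t_{m_l}).\<close>
definition Rmat :: "nat \<Rightarrow> nat list \<Rightarrow> real list \<Rightarrow> K mat" where
  "Rmat a m ts = Matrix.mat (length m) (length m)
     (\<lambda>(k, l). (if k = l then 1 else 0) + emb [:ts ! l:] * emb (rho a (m ! k) (m ! l)))"

definition tau :: "nat \<Rightarrow> nat list \<Rightarrow> real list \<Rightarrow> K" where
  "tau a m ts = Determinant.det (Rmat a m ts)"

definition Qvec :: "nat \<Rightarrow> nat list \<Rightarrow> real list \<Rightarrow> K vec" where
  "Qvec a m ts = (tau a m ts \<cdot>\<^sub>m the (mat_inverse (Rmat a m ts)))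
      *\<^sub>v Matrix.vec (length m) (\<lambda>k. emb (geg (real a + 1/2) (m ! k)))"

definition Cmi :: "nat \<Rightarrow> nat list \<Rightarrow> real list \<Rightarrow> real \<Rightarrow> nat \<Rightarrow> K" where
  "Cmi a m ts s i = Qvec a (m @ [i]) (ts @ [s]) $ length m"

primrec tilde :: "nat \<Rightarrow> nat list \<Rightarrow> real list \<Rightarrow> nat \<Rightarrow> K \<times> (nat \<Rightarrow> K) \<times> (nat \<Rightarrow> nat \<Rightarrow> K)" where
  "tilde a m ts 0 = (1, \<lambda>i. emb (geg (real a + 1/2) i), \<lambda>i1 i2. emb (rho a i1 i2))"
| "tilde a m ts (Suc j) =
     (case tilde a m ts j of (tt, pp, rr) \<Rightarrow>
        let mj = m ! j; t = emb [:ts ! j:]; d = 1 + t * rr mj mj in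
        (d * tt,
         \<lambda>i. d * pp i - t * rr i mj * pp mj,
         \<lambda>i1 i2. rr i1 i2 - t * rr i1 mj * rr i2 mj / d))"

definition tau_t :: "nat \<Rightarrow> nat list \<Rightarrow> real list \<Rightarrow> nat \<Rightarrow> K" where
  "tau_t a m ts j = fst (tilde a m ts j)"

definition pi_t :: "nat \<Rightarrow> nat list \<Rightarrow> real list \<Rightarrow> nat \<Rightarrow> nat \<Rightarrow> K" where
  "pi_t a m ts j i = fst (snd (tilde a m ts j)) i"

end

theory Submission
  imports Defs "Jordan_Normal_Form.Column_Operations"
begin

text \<open>By Cramer's rule, C_{m;i} is the determinant of R_{(m,i)} with its last column replaced
  by (C_{m_1}, ..., C_{m_n}, C_i); this is why the parameter s drops out. Gaussian elimination on
  the first row and column of R_m, with pivot 1 + t_{m_1} \<rho>_{m_1 m_1}, leaves a matrix of the same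
  shape for (m_2, ..., m_n) in which \<rho> is replaced by its Schur complement \<rho>~_1 (this uses the
  symmetry of \<rho>), and turns the bordering column into \<pi>~_1 divided by the pivot. Iterating gives
  both identities. All pivots are nonzero because every \<rho>_{ij} vanishes at z = -1, so the leading
  minors of R_m are polynomials with value 1 there. As determinants of polynomial matrices,
  \<tau>~_j and \<pi>~_{j;i} are polynomials.\<close>

lemma det_pivot_first:
  fixes A :: "'a::field mat"
  assumes A: "A \<in> carrier_mat (Suc n) (Suc n)" and pivot: "A $$ (0,0) \<noteq> 0"
  shows "det A = A $$ (0,0) * det (Matrix.mat n n (\<lambda>(i,j).
    A $$ (Suc i, Suc j) - A $$ (Suc i, 0) * A $$ (0, Suc j) / A $$ (0,0)))"
    (is "_ = _ * det ?S")
proof -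
  let ?p = "A $$ (0,0)"
  define L where "L = Matrix.mat (Suc n) (Suc n)
    (\<lambda>(i,j). of_bool (i = j) - of_bool (j = 0 \<and> 0 < i) * (A $$ (i,0) / ?p))"
  define T where "T = four_block_mat (Matrix.mat 1 1 (\<lambda>_. ?p))
    (Matrix.mat 1 n (\<lambda>(_,j). A $$ (0, Suc j))) (0\<^sub>m n 1) ?S"
  have L: "L \<in> carrier_mat (Suc n) (Suc n)" by (simp add: L_def)
  have det_L: "det L = 1"
    by (subst det_lower_triangular[OF _ L]) (auto simp: L_def prod_list_diag_prod intro!: prod.neutral)
  have LA: "L * A = T"
  proof (rule eq_matI)
    fix i j assume "i < dim_row T" "j < dim_col T"
    then have ij: "i < Suc n" "j < Suc n" by (simp_all add: T_def)
    have "(L * A) $$ (i,j) = (\<Sum>k\<in>{0..<Suc n}. L $$ (i,k) * A $$ (k,j))"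
      using ij A L by (simp add: scalar_prod_def)
    also have "\<dots> = (\<Sum>k\<in>{0..<Suc n}. of_bool (k = i) * A $$ (k,j)
        - of_bool (k = 0 \<and> 0 < i) * (A $$ (i,0) / ?p * A $$ (k,j)))"
      using ij by (intro sum.cong) (auto simp: L_def)
    also have "\<dots> = A $$ (i,j) - (if i = 0 then 0 else A $$ (i,0) / ?p * A $$ (0,j))"
    proof -
      have "{0..<Suc n} \<inter> {k. k = i} = {i}"
        "{0..<Suc n} \<inter> {k. k = 0 \<and> 0 < i} = (if i = 0 then {} else {0})"
        using ij by auto
      then show ?thesis
        unfolding sum_subtractf sum_of_bool_mult_eq[OF finite_atLeastLessThan] by simp
    qed
    also have "\<dots> = T $$ (i,j)"
      using ij pivot unfolding T_def by (cases i; cases j) auto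
    finally show "(L * A) $$ (i,j) = T $$ (i,j)" .
  qed (use A L in \<open>simp_all add: T_def\<close>)
  have "det A = det (L * A)" using det_mult[OF L A] det_L by simp
  also have "\<dots> = ?p * det ?S"
    unfolding LA T_def by (subst det_four_block_mat_lower_left_zero_col) (auto simp: det_single)
  finally show ?thesis .
qed

lemma det_multcol:
  fixes A :: "'a::comm_ring_1 mat"
  assumes "A \<in> carrier_mat n n" and "k < n"
  shows "det (multcol k a A) = a * det A"
  using assms by (simp add: multcol_mat det_mult det_multrow_mat)

lemma cramer_rule_mat_inverse:
  fixes A :: "'a::field mat"
  assumes A: "A \<in> carrier_mat n n" and det: "det A \<noteq> 0" and v: "v \<in> carrier_vec n" and k: "k < n"
  shows "((det A \<cdot>\<^sub>m the (mat_inverse A)) *\<^sub>v v) $ k = det (replace_col A v k)"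
proof -
  obtain B where B: "mat_inverse A = Some B"
    using mat_inverse(1)[OF A, where b = "()"] det_non_zero_imp_unit[OF A det, where b = "()"] by blast
  with mat_inverse(2)[OF A] have AB: "A * B = 1\<^sub>m n" and B_carrier: "B \<in> carrier_mat n n"
    by auto
  have "A *\<^sub>v (B *\<^sub>v v) = v"
    using A B_carrier v AB by (simp add: assoc_mult_mat_vec[symmetric])
  then have "det (replace_col A v k) = (B *\<^sub>v v) $ k * det A"
    using cramer_lemma_mat[OF A _ k, of "B *\<^sub>v v"] B_carrier v by simp
  then show ?thesis using B B_carrier v k by simp
qed

text \<open>With p = m_j and t = t_{m_j}, pivot_kernel is \<rho>~_j and pivot_column is \<pi>~_j of the
  theorem, as functions of \<rho>~_{j-1} and \<pi>~_{j-1}.\<close>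

definition pivot_kernel :: "(nat \<Rightarrow> nat \<Rightarrow> 'a::field) \<Rightarrow> nat \<Rightarrow> 'a \<Rightarrow> nat \<Rightarrow> nat \<Rightarrow> 'a" where
  "pivot_kernel r p t i1 i2 = r i1 i2 - t * r i1 p * r i2 p / (1 + t * r p p)"

definition pivot_column :: "(nat \<Rightarrow> nat \<Rightarrow> 'a::field) \<Rightarrow> (nat \<Rightarrow> 'a) \<Rightarrow> nat \<Rightarrow> 'a \<Rightarrow> nat \<Rightarrow> 'a" where
  "pivot_column r c p t i = (1 + t * r p p) * c i - t * r i p * c p"

lemma pivot_kernel_sym:
  assumes "\<And>x y. r x y = r y x"
  shows "pivot_kernel r p t x y = pivot_kernel r p t y x"
  unfolding pivot_kernel_def by (simp add: assms[of x y] ac_simps)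

text \<open>rmat r mf tf n is R_m with \<rho> generalised to a kernel r, where mf l = m_l and tf l = t_{m_l};
  bordered_rmat r c mf tf n i is R_{(m,i)} with its last column replaced by the values of c.\<close>

definition rmat :: "(nat \<Rightarrow> nat \<Rightarrow> 'a::comm_ring_1) \<Rightarrow> (nat \<Rightarrow> nat) \<Rightarrow> (nat \<Rightarrow> 'a) \<Rightarrow> nat \<Rightarrow> 'a mat" where
  "rmat r mf tf n = Matrix.mat n n (\<lambda>(k,l). (if k = l then 1 else 0) + tf l * r (mf k) (mf l))"

definition bordered_rmat :: "(nat \<Rightarrow> nat \<Rightarrow> 'a::comm_ring_1) \<Rightarrow> (nat \<Rightarrow> 'a) \<Rightarrow> (nat \<Rightarrow> nat) \<Rightarrow>
    (nat \<Rightarrow> 'a) \<Rightarrow> nat \<Rightarrow> nat \<Rightarrow> 'a mat" where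
  "bordered_rmat r c mf tf n i =
    replace_col (rmat r (mf(n := i)) tf (Suc n)) (Matrix.vec (Suc n) (c \<circ> mf(n := i))) n"

lemma bordered_rmat_index:
  "k < Suc n \<Longrightarrow> l < Suc n \<Longrightarrow> bordered_rmat r c mf tf n i $$ (k,l) =
    (if l = n then c ((mf(n := i)) k) else (if k = l then 1 else 0) + tf l * r ((mf(n := i)) k) (mf l))"
  by (simp add: bordered_rmat_def rmat_def replace_col_def)

lemma dim_bordered_rmat [simp]:
  "dim_row (bordered_rmat r c mf tf n i) = Suc n" "dim_col (bordered_rmat r c mf tf n i) = Suc n"
  unfolding bordered_rmat_def rmat_def replace_col_def by simp_all

lemma bordered_rmat_carrier: "bordered_rmat r c mf tf n i \<in> carrier_mat (Suc n) (Suc n)"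
  by (rule carrier_matI) simp_all

lemma (in comm_ring_hom) map_mat_rmat:
  "map_mat hom (rmat r mf tf n) = rmat (\<lambda>i j. hom (r i j)) mf (hom \<circ> tf) n"
  by (rule eq_matI) (auto simp: rmat_def hom_add hom_mult)

lemma (in comm_ring_hom) map_mat_bordered_rmat:
  "map_mat hom (bordered_rmat r c mf tf n i) =
    bordered_rmat (\<lambda>i j. hom (r i j)) (hom \<circ> c) mf (hom \<circ> tf) n i"
  by (rule eq_matI) (auto simp: bordered_rmat_index hom_add hom_mult)

lemma det_rmat_Suc:
  fixes r :: "nat \<Rightarrow> nat \<Rightarrow> 'a::field"
  assumes sym: "\<And>x y. r x y = r y x" and pivot: "1 + tf 0 * r (mf 0) (mf 0) \<noteq> 0"
  shows "det (rmat r mf tf (Suc k)) =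
    (1 + tf 0 * r (mf 0) (mf 0)) * det (rmat (pivot_kernel r (mf 0) (tf 0)) (mf \<circ> Suc) (tf \<circ> Suc) k)"
proof -
  let ?A = "rmat r mf tf (Suc k)"
  have "det ?A = ?A $$ (0,0) * det (Matrix.mat k k (\<lambda>(i,j).
      ?A $$ (Suc i, Suc j) - ?A $$ (Suc i, 0) * ?A $$ (0, Suc j) / ?A $$ (0,0)))"
    by (rule det_pivot_first) (use pivot in \<open>auto simp: rmat_def\<close>)
  also have "Matrix.mat k k (\<lambda>(i,j).
      ?A $$ (Suc i, Suc j) - ?A $$ (Suc i, 0) * ?A $$ (0, Suc j) / ?A $$ (0,0))
    = rmat (pivot_kernel r (mf 0) (tf 0)) (mf \<circ> Suc) (tf \<circ> Suc) k"
  proof (rule eq_matI)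
    fix i j assume "i < dim_row (rmat (pivot_kernel r (mf 0) (tf 0)) (mf \<circ> Suc) (tf \<circ> Suc) k)"
      "j < dim_col (rmat (pivot_kernel r (mf 0) (tf 0)) (mf \<circ> Suc) (tf \<circ> Suc) k)"
    moreover have "r (mf 0) (mf (Suc j)) = r (mf (Suc j)) (mf 0)" by (rule sym)
    ultimately show "Matrix.mat k k (\<lambda>(i,j).
      ?A $$ (Suc i, Suc j) - ?A $$ (Suc i, 0) * ?A $$ (0, Suc j) / ?A $$ (0,0)) $$ (i,j)
      = rmat (pivot_kernel r (mf 0) (tf 0)) (mf \<circ> Suc) (tf \<circ> Suc) k $$ (i,j)"
      by (simp add: rmat_def pivot_kernel_def algebra_simps)
  qed (simp_all add: rmat_def)
  finally show ?thesis by (simp add: rmat_def)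
qed

lemma det_bordered_rmat_Suc:
  fixes r :: "nat \<Rightarrow> nat \<Rightarrow> 'a::field"
  assumes sym: "\<And>x y. r x y = r y x" and pivot: "1 + tf 0 * r (mf 0) (mf 0) \<noteq> 0"
  shows "det (bordered_rmat r c mf tf (Suc n) i) = det (bordered_rmat (pivot_kernel r (mf 0) (tf 0))
    (pivot_column r c (mf 0) (tf 0)) (mf \<circ> Suc) (tf \<circ> Suc) n i)"
proof -
  let ?d = "1 + tf 0 * r (mf 0) (mf 0)"
  let ?B = "bordered_rmat r c mf tf (Suc n) i"
  let ?B' = "bordered_rmat (pivot_kernel r (mf 0) (tf 0))
    (pivot_column r c (mf 0) (tf 0)) (mf \<circ> Suc) (tf \<circ> Suc) n i"
  have B00: "?B $$ (0,0) = ?d" by (simp add: bordered_rmat_index)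
  have "det ?B = ?d * det (Matrix.mat (Suc n) (Suc n) (\<lambda>(k,l).
      ?B $$ (Suc k, Suc l) - ?B $$ (Suc k, 0) * ?B $$ (0, Suc l) / ?B $$ (0,0)))"
    unfolding B00[symmetric] by (rule det_pivot_first[OF bordered_rmat_carrier]) (use pivot B00 in simp)
  also have "Matrix.mat (Suc n) (Suc n) (\<lambda>(k,l).
      ?B $$ (Suc k, Suc l) - ?B $$ (Suc k, 0) * ?B $$ (0, Suc l) / ?B $$ (0,0))
    = multcol n (1 / ?d) ?B'"
  proof (rule eq_matI)
    fix k l assume "k < dim_row (multcol n (1 / ?d) ?B')" "l < dim_col (multcol n (1 / ?d) ?B')"
    then have kl: "k < Suc n" "l < Suc n" by simp_all
    let ?x = "((mf \<circ> Suc)(n := i)) k"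
    have shift: "(mf(Suc n := i)) (Suc k) = ?x" "(mf(Suc n := i)) 0 = mf 0"
      using kl by simp_all
    have pivot_row: "?B $$ (Suc k, 0) = tf 0 * r ?x (mf 0)"
      using kl by (simp add: bordered_rmat_index shift del: fun_upd_apply)
    have entry: "Matrix.mat (Suc n) (Suc n) (\<lambda>(k,l).
      ?B $$ (Suc k, Suc l) - ?B $$ (Suc k, 0) * ?B $$ (0, Suc l) / ?B $$ (0,0)) $$ (k,l)
      = ?B $$ (Suc k, Suc l) - tf 0 * r ?x (mf 0) * ?B $$ (0, Suc l) / ?d"
      using kl by (simp add: B00 pivot_row)
    show "Matrix.mat (Suc n) (Suc n) (\<lambda>(k,l).
      ?B $$ (Suc k, Suc l) - ?B $$ (Suc k, 0) * ?B $$ (0, Suc l) / ?B $$ (0,0)) $$ (k,l)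
      = multcol n (1 / ?d) ?B' $$ (k,l)"
    proof (cases "l = n")
      case True
      have "?B $$ (Suc k, Suc l) = c ?x" "?B $$ (0, Suc l) = c (mf 0)"
        "multcol n (1 / ?d) ?B' $$ (k,l) = 1 / ?d * pivot_column r c (mf 0) (tf 0) ?x"
        using kl True by (simp_all add: bordered_rmat_index shift del: fun_upd_apply)
      then show ?thesis unfolding entry using pivot
        by (simp add: pivot_column_def field_simps)
    next
      case False
      have "?B $$ (Suc k, Suc l) = (if k = l then 1 else 0) + tf (Suc l) * r ?x (mf (Suc l))"
        "?B $$ (0, Suc l) = tf (Suc l) * r (mf 0) (mf (Suc l))"
        "multcol n (1 / ?d) ?B' $$ (k,l) =
          (if k = l then 1 else 0) + tf (Suc l) * pivot_kernel r (mf 0) (tf 0) ?x (mf (Suc l))"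
        using kl False by (simp_all add: bordered_rmat_index shift del: fun_upd_apply)
      moreover have "r (mf 0) (mf (Suc l)) = r (mf (Suc l)) (mf 0)" by (rule sym)
      ultimately show ?thesis unfolding entry
        by (simp add: pivot_kernel_def algebra_simps)
    qed
  qed simp_all
  \<comment> \<open>the pivot factor cancels against the 1/d left in the bordering column\<close>
  also have "det (multcol n (1 / ?d) ?B') = 1 / ?d * det ?B'"
    by (rule det_multcol[OF bordered_rmat_carrier]) simp
  finally show ?thesis using pivot by simp
qed

definition elim_step :: "nat \<Rightarrow> 'a::field \<Rightarrow> 'a \<times> (nat \<Rightarrow> 'a) \<times> (nat \<Rightarrow> nat \<Rightarrow> 'a) \<Rightarrow>
    'a \<times> (nat \<Rightarrow> 'a) \<times> (nat \<Rightarrow> nat \<Rightarrow> 'a)" where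
  "elim_step p t = (\<lambda>(\<tau>, c, r). ((1 + t * r p p) * \<tau>, pivot_column r c p t, pivot_kernel r p t))"

primrec elim_iter :: "'a::field \<times> (nat \<Rightarrow> 'a) \<times> (nat \<Rightarrow> nat \<Rightarrow> 'a) \<Rightarrow> (nat \<Rightarrow> nat) \<Rightarrow> (nat \<Rightarrow> 'a) \<Rightarrow>
    nat \<Rightarrow> 'a \<times> (nat \<Rightarrow> 'a) \<times> (nat \<Rightarrow> nat \<Rightarrow> 'a)" where
  "elim_iter x mf tf 0 = x"
| "elim_iter x mf tf (Suc j) = elim_step (mf j) (tf j) (elim_iter x mf tf j)"

lemma elim_iter_Suc':
  "elim_iter x mf tf (Suc j) = elim_iter (elim_step (mf 0) (tf 0) x) (mf \<circ> Suc) (tf \<circ> Suc) j"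
  by (induction j) auto

lemma elim_iter_det:
  fixes r :: "nat \<Rightarrow> nat \<Rightarrow> 'a::field"
  assumes "\<And>x y. r x y = r y x" and "\<And>k. k \<le> n \<Longrightarrow> det (rmat r mf tf k) \<noteq> 0"
  shows "fst (elim_iter (\<tau>, c, r) mf tf n) = \<tau> * det (rmat r mf tf n)
    \<and> fst (snd (elim_iter (\<tau>, c, r) mf tf n)) = (\<lambda>i. det (bordered_rmat r c mf tf n i))"
  using assms
proof (induction n arbitrary: \<tau> c r mf tf)
  case 0
  have "rmat r mf tf 0 = 1\<^sub>m 0" by (rule eq_matI) (simp_all add: rmat_def)
  moreover have "det (bordered_rmat r c mf tf 0 i) = c i" for i
    using det_single[of "bordered_rmat r c mf tf 0 i"] bordered_rmat_carrier[of r c mf tf 0 i]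
    by (simp add: bordered_rmat_index)
  ultimately show ?case by simp
next
  case (Suc n)
  let ?d = "1 + tf 0 * r (mf 0) (mf 0)"
  let ?r = "pivot_kernel r (mf 0) (tf 0)"
  have sym: "r x y = r y x" for x y by (rule Suc.prems(1))
  have "det (rmat r mf tf 1) = ?d" by (simp add: det_single rmat_def)
  then have pivot: "?d \<noteq> 0" using Suc.prems(2)[of 1] by simp
  have det_rmat: "det (rmat r mf tf (Suc k)) = ?d * det (rmat ?r (mf \<circ> Suc) (tf \<circ> Suc) k)" for k
    by (rule det_rmat_Suc) (use sym pivot in auto)
  have "det (rmat ?r (mf \<circ> Suc) (tf \<circ> Suc) k) \<noteq> 0" if "k \<le> n" for k
    using Suc.prems(2)[of "Suc k"] that by (simp add: det_rmat)
  note IH = Suc.IH[OF pivot_kernel_sym[OF sym] this]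
  have "elim_iter (\<tau>, c, r) mf tf (Suc n) =
      elim_iter (?d * \<tau>, pivot_column r c (mf 0) (tf 0), ?r) (mf \<circ> Suc) (tf \<circ> Suc) n"
    unfolding elim_iter_Suc' by (simp add: elim_step_def)
  moreover have "det (bordered_rmat r c mf tf (Suc n) i) =
      det (bordered_rmat ?r (pivot_column r c (mf 0) (tf 0)) (mf \<circ> Suc) (tf \<circ> Suc) n i)" for i
    by (rule det_bordered_rmat_Suc) (use sym pivot in auto)
  ultimately show ?case using IH by (simp add: det_rmat comp_def)
qed

definition poly_antideriv :: "'a::field_char_0 poly \<Rightarrow> 'a poly" where
  "poly_antideriv f = (\<Sum>k\<le>degree f. monom (coeff f k / of_nat (Suc k)) (Suc k))"

lemma pderiv_poly_antideriv: "pderiv (poly_antideriv f) = f"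
proof -
  have pderiv_sum: "pderiv (sum g I) = (\<Sum>i\<in>I. pderiv (g i))" for g :: "nat \<Rightarrow> 'a poly" and I
    by (induction I rule: infinite_finite_induct) (simp_all add: pderiv_add)
  have "pderiv (poly_antideriv f) = (\<Sum>k\<le>degree f. monom (coeff f k) k)"
    unfolding poly_antideriv_def pderiv_sum pderiv_monom
    by (intro sum.cong refl) (simp del: of_nat_Suc)
  also have "\<dots> = f" by (rule poly_as_sum_of_monoms)
  finally show ?thesis .
qed

lemma ex1_poly_interval_integral:
  fixes f :: "real poly" and a :: real
  shows "\<exists>!p. \<forall>z. poly p z = (LBINT u=a..z. poly f u)"
proof -
  let ?F = "poly_antideriv f"
  let ?p = "?F - [:poly ?F a:]"
  have "(LBINT u=a..z. poly f u) = poly ?F z - poly ?F a" for z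
  proof (rule interval_integral_FTC_finite)
    fix x
    have "(poly ?F has_real_derivative poly f x) (at x)"
      using poly_DERIV[of ?F x] by (simp add: pderiv_poly_antideriv)
    then show "(poly ?F has_vector_derivative poly f x) (at x within {min a z..max a z})"
      by (simp add: has_real_derivative_iff_has_vector_derivative[symmetric] has_field_derivative_at_within)
  qed (intro continuous_intros)
  then have "\<forall>z. poly ?p z = (LBINT u=a..z. poly f u)" by simp
  moreover have "q = ?p" if "\<forall>z. poly q z = (LBINT u=a..z. poly f u)" for q
    using that calculation by (simp add: poly_eq_poly_eq_iff[symmetric] fun_eq_iff)
  ultimately show ?thesis by blast
qed

lemma poly_rho:
  "poly (rho a i j) z = (LBINT u=-1..z.
    poly (geg (real a + 1/2) i) u * poly (geg (real a + 1/2) j) u * (1 - u^2)^a)"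
proof -
  define f where "f = geg (real a + 1/2) i * geg (real a + 1/2) j * [:1, 0, -1:] ^ a"
  have "poly f u = poly (geg (real a + 1/2) i) u * poly (geg (real a + 1/2) j) u * (1 - u^2)^a" for u
    by (simp add: f_def poly_power power2_eq_square)
  moreover have "ereal (-1) = -1" by (simp add: one_ereal_def)
  ultimately have "\<exists>!p. \<forall>z. poly p z = (LBINT u=-1..z.
      poly (geg (real a + 1/2) i) u * poly (geg (real a + 1/2) j) u * (1 - u^2)^a)"
    using ex1_poly_interval_integral[of "-1" f] by simp
  then show ?thesis unfolding rho_def by (rule theI'[THEN spec])
qed

lemma rho_sym: "rho a i j = rho a j i"
  unfolding rho_def by (simp add: ac_simps)

lemma poly_rho_minus_one: "poly (rho a i j) (-1) = 0"
proof -
  have "ereal (-1) = -1" by (simp add: one_ereal_def)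
  then show ?thesis by (simp add: poly_rho)
qed

lemma det_rmat_rho_neq_0:
  fixes q :: "nat \<Rightarrow> real poly"
  shows "det (rmat (rho a) mf q n) \<noteq> 0"
proof -
  \<comment> \<open>every \<rho>_{ij} vanishes at -1, so R evaluates to the identity there\<close>
  interpret eval: comm_ring_hom "\<lambda>p::real poly. poly p (-1)" by unfold_locales simp_all
  have "map_mat (\<lambda>p. poly p (-1)) (rmat (rho a) mf q n) = 1\<^sub>m n"
    by (rule eq_matI) (simp_all add: rmat_def poly_rho_minus_one)
  then have "poly (det (rmat (rho a) mf q n)) (-1) = 1"
    using eval.hom_det[of "rmat (rho a) mf q n"] by simp
  then show ?thesis by auto
qed

interpretation emb: comm_ring_hom emb
  by unfold_locales (simp_all add: emb_def One_fract_def Zero_fract_def)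

lemma emb_eq_0_iff: "emb p = 0 \<longleftrightarrow> p = 0"
  by (simp add: emb_def Zero_fract_def eq_fract)

abbreviation rhoK :: "nat \<Rightarrow> nat \<Rightarrow> nat \<Rightarrow> K" where
  "rhoK a i j \<equiv> emb (rho a i j)"

abbreviation gegK :: "nat \<Rightarrow> nat \<Rightarrow> K" where
  "gegK a i \<equiv> emb (geg (real a + 1/2) i)"

abbreviation weightK :: "real list \<Rightarrow> nat \<Rightarrow> K" where
  "weightK ts l \<equiv> emb [:ts ! l:]"

lemma tilde_eq_elim_iter: "tilde a m ts j = elim_iter (1, gegK a, rhoK a) (nth m) (weightK ts) j"
  by (induction j)
    (simp_all add: elim_step_def pivot_column_def pivot_kernel_def Let_def fun_eq_iff split: prod.splits)

lemma rmat_rhoK_eq_map_mat: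
  "rmat (rhoK a) mf (weightK ts) n = map_mat emb (rmat (rho a) mf (\<lambda>l. [:ts ! l:]) n)"
  by (simp add: emb.map_mat_rmat comp_def)

lemma bordered_rmat_rhoK_eq_map_mat:
  "bordered_rmat (rhoK a) (gegK a) mf (weightK ts) n i =
    map_mat emb (bordered_rmat (rho a) (geg (real a + 1/2)) mf (\<lambda>l. [:ts ! l:]) n i)"
  by (simp add: emb.map_mat_bordered_rmat comp_def)

lemma tau_t_eq_det: "tau_t a m ts j = det (rmat (rhoK a) (nth m) (weightK ts) j)"
  and pi_t_eq_det: "pi_t a m ts j i = det (bordered_rmat (rhoK a) (gegK a) (nth m) (weightK ts) j i)"
proof -
  have "det (rmat (rhoK a) (nth m) (weightK ts) k) \<noteq> 0" for k
    by (simp add: rmat_rhoK_eq_map_mat emb_eq_0_iff det_rmat_rho_neq_0)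
  from elim_iter_det[of "rhoK a", OF _ this] rho_sym
  show "tau_t a m ts j = det (rmat (rhoK a) (nth m) (weightK ts) j)"
    and "pi_t a m ts j i = det (bordered_rmat (rhoK a) (gegK a) (nth m) (weightK ts) j i)"
    by (simp_all add: tau_t_def pi_t_def tilde_eq_elim_iter)
qed

lemma Rmat_eq_rmat: "Rmat a m ts = rmat (rhoK a) (nth m) (weightK ts) (length m)"
  by (rule eq_matI) (simp_all add: Rmat_def rmat_def)

lemma Cmi_eq_det_bordered_rmat:
  assumes "length ts = length m"
  shows "Cmi a m ts s i = det (bordered_rmat (rhoK a) (gegK a) (nth m) (weightK ts) (length m) i)"
proof -
  let ?R = "Rmat a (m @ [i]) (ts @ [s])"
  let ?v = "Matrix.vec (Suc (length m)) (\<lambda>k. gegK a ((m @ [i]) ! k))"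
  have R: "?R \<in> carrier_mat (Suc (length m)) (Suc (length m))" by (simp add: Rmat_def)
  have "det ?R \<noteq> 0"
    by (simp add: Rmat_eq_rmat rmat_rhoK_eq_map_mat emb_eq_0_iff det_rmat_rho_neq_0)
  then have "Cmi a m ts s i = det (replace_col ?R ?v (length m))"
    unfolding Cmi_def Qvec_def tau_def using cramer_rule_mat_inverse[OF R] by simp
  also have "replace_col ?R ?v (length m) =
      bordered_rmat (rhoK a) (gegK a) (nth m) (weightK ts) (length m) i"
    by (rule eq_matI)
      (use assms in \<open>auto simp: replace_col_def Rmat_def bordered_rmat_index nth_append\<close>)
  finally show ?thesis .
qed

theorem mainTheorem15:
  fixes a :: nat and m :: "nat list" and ts :: "real list"
  assumes "length ts = length m"
  shows "tau a m ts = tau_t a m ts (length m)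
    \<and> (\<forall>s i. Cmi a m ts s i = pi_t a m ts (length m) i)
    \<and> (\<forall>j \<le> length m. (\<exists>p. tau_t a m ts j = emb p) \<and> (\<forall>i. \<exists>p. pi_t a m ts j i = emb p))"
proof (intro conjI allI impI)
  show "tau a m ts = tau_t a m ts (length m)"
    by (simp add: tau_def Rmat_eq_rmat tau_t_eq_det)
  show "Cmi a m ts s i = pi_t a m ts (length m) i" for s i
    using assms by (simp add: Cmi_eq_det_bordered_rmat pi_t_eq_det)
  show "\<exists>p. tau_t a m ts j = emb p" for j
    by (auto simp: tau_t_eq_det rmat_rhoK_eq_map_mat)
  show "\<exists>p. pi_t a m ts j i = emb p" for j i
    by (auto simp: pi_t_eq_det bordered_rmat_rhoK_eq_map_mat)
qed

end
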